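(* Let $p,q,r$ be pairwise distinct primes with $p<q$ and $p<r$, and write $\Phi_{pqr}(x)=\sum_{n}a_{pqr}(n)x^n$. Put $A_+=\max_n a_{pqr}(n)$ and $A_-=\min_n a_{pqr}(n)$. Let $q',r'\in\{1,\dots,p-1\}$ be the inverses of $q$ and $r$ modulo $p$, let $\alpha=\min\{q',r',p-q',p-r'\}$, and let $\beta$ be the unique integer with $0<\beta<p$ and $\alpha\beta qr\equiv 1 \pmod p$. Then $$A_+\le \min\{2\alpha+\beta,\;p-\beta\},\qquad -A_-\le \min\{p+2\alpha-\beta,\;\beta\}.$$
   Context: $\Phi_{pqr}(x)=\prod_{0<k<pqr,\ \gcd(k,pqr)=1}(x-\zeta^k)$, where $\zeta$ is a primitive $pqr$-th root of unity, is the ternary cyclotomic polynomial; $a_{pqr}(n)$ denotes its coefficient of $x^n$ (zero for $n$ outside $[0,\deg\Phi_{pqr}]$). *)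

theory Defs
  imports Complex_Main "HOL-Computational_Algebra.Polynomial" "HOL-Number_Theory.Cong"
begin

definition cyclo_poly :: "nat \<Rightarrow> complex poly" where
  "cyclo_poly m = (\<Prod>k\<in>{k. 0 < k \<and> k < m \<and> coprime k m}. [:- ((cis (2 * pi / real m)) ^ k), 1:])"

text \<open>Its coefficient of x^n (these are integers; we take the real part to compare them).
  Zero for n beyond the degree, by definition of coeff.\<close>
definition cyclo_coeff :: "nat \<Rightarrow> nat \<Rightarrow> real" where
  "cyclo_coeff m n = Re (coeff (cyclo_poly m) n)"

end

theory Submission
  imports Defs "HOL-Computational_Algebra.Fundamental_Theorem_Algebra"
begin

text \<open>
  Let \<open>N = p q r\<close>.  From the identity
    \<open>\<Phi>\<^sub>N \<cdot> (1 - x\<^sup>p\<^sup>q)(1 - x\<^sup>p\<^sup>r)(1 - x\<^sup>q\<^sup>r) = (1 - x\<^sup>N)(1 + x + \<dots> + x\<^sup>p\<^sup>-\<^sup>1)(1 - x\<^sup>q)(1 - x\<^sup>r)\<close>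
  (proved by comparing root multiplicities) and the expansion, modulo \<open>x\<^sup>N\<close>, of
  \<open>1/((1 - x\<^sup>p\<^sup>q)(1 - x\<^sup>p\<^sup>r)(1 - x\<^sup>q\<^sup>r))\<close> as the indicator \<open>\<chi>\<close> of the semigroup generated by
  \<open>q r, p r, p q\<close>, one gets for \<open>n < N\<close>
    \<open>a\<^sub>p\<^sub>q\<^sub>r(n) = \<Sum> (\<chi>(k) - \<chi>(k - q) - \<chi>(k - r) + \<chi>(k - q - r))\<close>,
  summed over the window \<open>n - p < k \<le> n\<close>.
  Writing \<open>k \<equiv> x q r + y p r + z p q (mod N)\<close>, each summand turns out to depend only on
  the residue \<open>x = k q' r' mod p\<close>, the rounded coordinate \<open>\<lfloor>p y / q\<rfloor>\<close> and a rounding error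
  \<open>e \<in> {0, 1}\<close>, through a fixed four-term pattern.  As \<open>k\<close> runs through the window, \<open>x\<close> runs
  through all residues mod \<open>p\<close>, and the pattern is \<open>+1\<close> (resp. \<open>-1\<close>) only on an explicit set of
  at most \<open>min(2a + b, p - b)\<close> (resp. \<open>min(p + 2a - b, b)\<close>) residues, where
  \<open>(a, b) = (q', r')\<close> or, after a reflection, \<open>(p - q', p - r')\<close>.  Finally \<open>(\<alpha>, \<beta>)\<close> is one of
  these pairs, up to exchanging \<open>q\<close> and \<open>r\<close>.
\<close>

lemma degree_xn_minus_1: "0 < n \<Longrightarrow> degree (monom (1::complex) n - 1) = n"
proof -
  assume n: "0 < n"
  have "monom (1::complex) n - 1 = monom 1 n + (-1)" by simp
  also have "degree \<dots> = n" using n by (subst degree_add_eq_left) (auto simp: degree_monom_eq)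
  finally show ?thesis .
qed

text \<open>\<open>x\<^sup>n - 1\<close> is the product of \<open>x - \<zeta>\<^sup>j\<close> over all powers of \<open>\<zeta> = e\<^sup>2\<^sup>\<pi>\<^sup>i\<^sup>/\<^sup>n\<close>:
  it is monic and squarefree, and its roots are exactly the \<open>n\<close>-th roots of unity.\<close>
lemma xn_minus_1_factors:
  assumes n: "0 < n"
  shows "monom (1::complex) n - 1 = (\<Prod>j<n. [: - ((cis (2*pi/real n))^j), 1:])"
proof -
  let ?P = "monom (1::complex) n - 1"
  have lc: "lead_coeff ?P = 1" using degree_xn_minus_1[OF n] n by simp
  have roots: "{z. poly ?P z = 0} = {z. z^n = 1}" by (simp add: poly_monom)
  have sqf: "rsquarefree ?P"
    unfolding rsquarefree_roots
  proof (intro allI notI)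
    fix z assume h: "poly ?P z = 0 \<and> poly (pderiv ?P) z = 0"
    hence "z^n = 1" by (simp add: poly_monom)
    hence "z \<noteq> 0" using n by (auto simp: power_0_left)
    moreover have "poly (pderiv ?P) z = of_nat n * z^(n-1)"
      by (simp add: pderiv_diff pderiv_monom poly_monom)
    ultimately show False using h n by simp
  qed
  have "?P = smult (lead_coeff ?P) (\<Prod>z|poly ?P z = 0. [:-z, 1:])"
    using complex_poly_decompose_rsquarefree[OF sqf] by simp
  also have "\<dots> = (\<Prod>z\<in>{z. z^n = 1}. [:-z, 1:])" using lc roots by simp
  also have "\<dots> = (\<Prod>k<n. [: - (cis (2 * pi * real k / real n)), 1:])"
    using prod.reindex_bij_betw[OF bij_betw_roots_unity[OF n], of "\<lambda>z. [:-z,1:]"] by simp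
  also have "\<dots> = (\<Prod>j<n. [: - ((cis (2*pi/real n))^j), 1:])"
    by (intro prod.cong refl) (simp add: DeMoivre mult_ac)
  finally show ?thesis .
qed

lemma prod_over_multiples:
  fixes d N n :: nat
  assumes "0 < d" "N = n * d"
  shows "(\<Prod>j<n. f (j*d)) = (\<Prod>k<N. f k ^ of_bool (d dvd k))"
proof -
  have img: "(\<lambda>j. j*d) ` {..<n} = {k\<in>{..<N}. d dvd k}"
  proof
    show "(\<lambda>j. j*d) ` {..<n} \<subseteq> {k\<in>{..<N}. d dvd k}" using assms by auto
    show "{k\<in>{..<N}. d dvd k} \<subseteq> (\<lambda>j. j*d) ` {..<n}"
    proof
      fix k assume k: "k \<in> {k\<in>{..<N}. d dvd k}"
      then obtain j where j: "k = d*j" by auto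
      have "j < n" using k j assms by (simp add: mult.commute)
      thus "k \<in> (\<lambda>j. j*d) ` {..<n}" using j by (auto simp: mult.commute)
    qed
  qed
  have inj: "inj_on (\<lambda>j. j*d) {..<n}" using assms by (auto simp: inj_on_def)
  have "(\<Prod>j<n. f (j*d)) = (\<Prod>k\<in>{k\<in>{..<N}. d dvd k}. f k)"
    using prod.reindex[OF inj, of f] img by simp
  also have "\<dots> = (\<Prod>k<N. if d dvd k then f k else 1)" by (rule prod.inter_filter) simp
  also have "\<dots> = (\<Prod>k<N. f k ^ of_bool (d dvd k))" by (intro prod.cong) auto
  finally show ?thesis .
qed

text \<open>All polynomials
  below are products of powers of these factors for one fixed \<open>N\<close>.\<close>
definition root_factor :: "nat \<Rightarrow> nat \<Rightarrow> complex poly" where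
  "root_factor N k = [: - ((cis (2*pi/real N))^k), 1:]"

text \<open>For \<open>n d = N\<close>, the \<open>n\<close>-th roots of unity are the \<open>\<zeta>\<^sub>N\<^sup>k\<close> with \<open>d | k\<close>.\<close>
lemma xn_minus_1_root_factors:
  fixes d N n :: nat
  assumes "0 < d" "N = n * d" "0 < n"
  shows "monom (1::complex) n - 1 = (\<Prod>k<N. root_factor N k ^ of_bool (d dvd k))"
proof -
  have "monom (1::complex) n - 1 = (\<Prod>j<n. [: - ((cis (2*pi/real n))^j), 1:])"
    by (rule xn_minus_1_factors) fact
  also have "\<dots> = (\<Prod>j<n. root_factor N (j*d))"
  proof (intro prod.cong refl)
    fix j
    have "real j * (2*pi/real n) = real (j*d) * (2*pi/real N)"
      using assms by (simp add: field_simps)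
    then show "[: - ((cis (2*pi/real n))^j), 1:] = root_factor N (j*d)"
      unfolding root_factor_def by (simp add: DeMoivre)
  qed
  also have "\<dots> = (\<Prod>k<N. root_factor N k ^ of_bool (d dvd k))" by (rule prod_over_multiples) fact+
  finally show ?thesis .
qed

lemma cyclo_poly_root_factors:
  "cyclo_poly N = (\<Prod>k<N. root_factor N k ^ of_bool (0 < k \<and> coprime k N))"
proof -
  have "cyclo_poly N = (\<Prod>k\<in>{k\<in>{..<N}. 0 < k \<and> coprime k N}. root_factor N k)"
    unfolding cyclo_poly_def root_factor_def by (intro prod.cong) auto
  also have "\<dots> = (\<Prod>k<N. if 0 < k \<and> coprime k N then root_factor N k else 1)"
    by (rule prod.inter_filter) simp
  also have "\<dots> = (\<Prod>k<N. root_factor N k ^ of_bool (0 < k \<and> coprime k N))" by (intro prod.cong) auto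
  finally show ?thesis .
qed

text \<open>Inclusion-exclusion for the multiplicity of \<open>\<zeta>\<^sub>N\<^sup>k\<close>, \<open>N = pqr\<close>: the root
  \<open>\<zeta>\<^sub>N\<^sup>k\<close> occurs equally often on both sides of the identity below.\<close>
lemma ternary_root_multiplicities:
  fixes p q r k :: nat
  assumes pr: "prime p" "prime q" "prime r" and d: "p \<noteq> q" "q \<noteq> r" "p \<noteq> r" and k: "k < p*q*r"
  shows "of_bool (0 < k \<and> coprime k (p*q*r)) + of_bool (r dvd k) + of_bool (q dvd k)
        + of_bool (p dvd k) + of_bool (p*q*r dvd k)
       = of_bool (1 dvd k) + of_bool (q*r dvd k) + of_bool (p*r dvd k) + (of_bool (p*q dvd k) :: nat)"
proof -
  have cop: "coprime p q" "coprime q r" "coprime p r" using pr d by (auto intro: primes_coprime)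
  have prime_cop: "coprime k s \<longleftrightarrow> \<not> s dvd k" if "prime s" for s
    using that prime_imp_coprime[of s k] by (auto dest: coprime_common_divisor simp: coprime_commute)
  have coprime_pqr: "coprime k (p*q*r) \<longleftrightarrow> \<not> p dvd k \<and> \<not> q dvd k \<and> \<not> r dvd k"
    using pr by (simp add: prime_cop)
  have prod_dvd: "a*b dvd k \<longleftrightarrow> a dvd k \<and> b dvd k" if "coprime a b" for a b :: nat
    using that divides_mult[of a k b] by (auto intro: dvd_mult_left dvd_mult_right)
  have "coprime (p*q) r" using cop by simp
  then have pqr: "p*q*r dvd k \<longleftrightarrow> p dvd k \<and> q dvd k \<and> r dvd k" using cop prod_dvd by metis
  have zero: "k = 0" if "p dvd k \<and> q dvd k \<and> r dvd k"
    using that pqr k by (metis dvd_imp_le leD neq0_conv)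
  show ?thesis using coprime_pqr prod_dvd[OF cop(1)] prod_dvd[OF cop(2)] prod_dvd[OF cop(3)] pqr zero
    by (cases "p dvd k"; cases "q dvd k"; cases "r dvd k"; cases "k = 0") auto
qed

text \<open>The classical identity
  \<open>\<Phi>\<^sub>p\<^sub>q\<^sub>r(x)(x\<^sup>p\<^sup>q - 1)(x\<^sup>p\<^sup>r - 1)(x\<^sup>q\<^sup>r - 1)(x - 1) = (x\<^sup>p\<^sup>q\<^sup>r - 1)(x\<^sup>p - 1)(x\<^sup>q - 1)(x\<^sup>r - 1)\<close>,
  proved by comparing the multiplicity of every root \<open>\<zeta>\<^sub>p\<^sub>q\<^sub>r\<^sup>k\<close>.\<close>
lemma cyclo_ternary_identity:
  fixes p q r :: nat
  assumes pr: "prime p" "prime q" "prime r" and d: "p \<noteq> q" "q \<noteq> r" "p \<noteq> r"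
  shows "cyclo_poly (p*q*r) * ((monom 1 (p*q) - 1) * (monom 1 (p*r) - 1) * (monom 1 (q*r) - 1) * (monom 1 1 - 1))
       = (monom 1 (p*q*r) - 1) * (monom 1 p - 1) * (monom 1 q - 1) * (monom 1 r - 1)"
proof -
  define N where "N = p*q*r"
  have "0 < N" using pr by (simp add: N_def prime_gt_0_nat)
  have factors: "monom (1::complex) n - 1 = (\<Prod>k<N. root_factor N k ^ of_bool (d dvd k))"
    if "N = n * d" for n d using that \<open>0 < N\<close> by (intro xn_minus_1_root_factors) auto
  let ?F = "\<lambda>d. (\<Prod>k<N. root_factor N k ^ of_bool (d dvd k))"
  have lhs_factors: "monom 1 (p*q) - 1 = ?F r" "monom 1 (p*r) - 1 = ?F q"
    "monom 1 (q*r) - 1 = ?F p" "monom 1 1 - 1 = ?F N"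
    by (rule factors; simp add: N_def mult_ac)+
  have rhs_factors: "monom 1 N - 1 = ?F 1" "monom 1 p - 1 = ?F (q*r)"
    "monom 1 q - 1 = ?F (p*r)" "monom 1 r - 1 = ?F (p*q)"
    by (rule factors; simp add: N_def mult_ac)+
  have pow_mult: "(\<Prod>k<N. f k ^ a k) * (\<Prod>k<N. f k ^ b k) = (\<Prod>k<N. f k ^ (a k + b k))"
    for f :: "nat \<Rightarrow> complex poly" and a b by (simp add: prod.distrib power_add)
  have "cyclo_poly N * ((monom 1 (p*q) - 1) * (monom 1 (p*r) - 1) * (monom 1 (q*r) - 1) * (monom 1 1 - 1))
      = (\<Prod>k<N. root_factor N k ^ (of_bool (0 < k \<and> coprime k N) + of_bool (r dvd k) + of_bool (q dvd k)
        + of_bool (p dvd k) + of_bool (N dvd k)))"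
    unfolding cyclo_poly_root_factors lhs_factors by (simp only: pow_mult mult.assoc add.assoc)
  also have "\<dots> = (\<Prod>k<N. root_factor N k ^ (of_bool (1 dvd k) + of_bool (q*r dvd k) + of_bool (p*r dvd k)
        + of_bool (p*q dvd k)))"
    unfolding N_def using ternary_root_multiplicities[OF pr d] by (intro prod.cong refl) auto
  also have "\<dots> = (monom 1 N - 1) * (monom 1 p - 1) * (monom 1 q - 1) * (monom 1 r - 1)"
    unfolding rhs_factors by (simp only: pow_mult mult.assoc add.assoc)
  finally show ?thesis unfolding N_def .
qed

text \<open>Dividing by \<open>x - 1\<close> and changing signs: the form of the identity used to read off
  coefficients, \<open>\<Phi>\<^sub>p\<^sub>q\<^sub>r \<cdot> (1 - x\<^sup>p\<^sup>q)(1 - x\<^sup>p\<^sup>r)(1 - x\<^sup>q\<^sup>r) = (1 - x\<^sup>p\<^sup>q\<^sup>r)(1 + \<dots> + x\<^sup>p\<^sup>-\<^sup>1)(1 - x\<^sup>q)(1 - x\<^sup>r)\<close>.\<close>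
lemma cyclo_ternary_identity':
  fixes p q r :: nat
  assumes pr: "prime p" "prime q" "prime r" and d: "p \<noteq> q" "q \<noteq> r" "p \<noteq> r"
  shows "cyclo_poly (p*q*r) * ((1 - monom 1 (p*q)) * (1 - monom 1 (p*r)) * (1 - monom 1 (q*r)))
       = (1 - monom 1 (p*q*r)) * ((\<Sum>i<p. monom 1 i) * (1 - monom 1 q) * (1 - monom 1 r))"
proof -
  define x :: "complex poly" where "x = monom 1 1 - 1"
  have geometric: "x * (\<Sum>i<n. monom 1 i) = monom 1 n - 1" for n
    unfolding x_def by (induction n) (simp_all add: algebra_simps mult_monom)
  have "x \<noteq> 0" unfolding x_def using degree_xn_minus_1[of 1] by auto
  moreover have "(cyclo_poly (p*q*r) * ((1 - monom 1 (p*q)) * (1 - monom 1 (p*r)) * (1 - monom 1 (q*r)))) * x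
      = ((1 - monom 1 (p*q*r)) * ((\<Sum>i<p. monom 1 i) * (1 - monom 1 q) * (1 - monom 1 r))) * x"
    using cyclo_ternary_identity[OF pr d] geometric[of p] unfolding x_def by algebra
  ultimately show ?thesis by simp
qed

text \<open>\<open>\<Phi>\<^sub>N\<close> has degree \<open>\<phi>(N) < N\<close>, so its coefficients vanish from \<open>N\<close> on.\<close>
lemma degree_cyclo_poly_less: "0 < N \<Longrightarrow> degree (cyclo_poly N) < N"
proof -
  assume N: "0 < N"
  let ?S = "{k. 0 < k \<and> k < N \<and> coprime k N}"
  have "degree (cyclo_poly N) \<le> sum (degree \<circ> (\<lambda>k. [:- ((cis (2 * pi / real N)) ^ k), 1:])) ?S"
    unfolding cyclo_poly_def by (rule degree_prod_sum_le) simp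
  also have "\<dots> = card ?S" by simp
  also have "card ?S \<le> card {1..<N}" by (intro card_mono) auto
  also have "\<dots> < N" using N by simp
  finally show ?thesis .
qed

lemma cyclo_coeff_eq_0: "0 < N \<Longrightarrow> N \<le> n \<Longrightarrow> cyclo_coeff N n = 0"
  using degree_cyclo_poly_less[of N] by (simp add: cyclo_coeff_def coeff_eq_0)

text \<open>The backward difference \<open>(\<Delta>\<^sub>a h)(t) = h(t) - h(t - a)\<close>: multiplying a power series by
  \<open>1 - x\<^sup>a\<close> applies \<open>\<Delta>\<^sub>a\<close> to its coefficient sequence.\<close>
definition back_diff :: "int \<Rightarrow> (int \<Rightarrow> int) \<Rightarrow> int \<Rightarrow> int" where
  "back_diff a h t = h t - h (t - a)"

text \<open>\<open>h\<close> describes the coefficients of \<open>P\<close> below degree \<open>N\<close> and vanishes on negative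
  arguments (so that shifted copies of \<open>h\<close> describe products with monomials).\<close>
definition coeffs_below :: "nat \<Rightarrow> complex poly \<Rightarrow> (int \<Rightarrow> int) \<Rightarrow> bool" where
  "coeffs_below N P h \<longleftrightarrow> (\<forall>j<N. coeff P j = of_int (h (int j))) \<and> (\<forall>t<0. h t = 0)"

lemma coeffs_below_one_minus_monom:
  assumes "coeffs_below N P h"
  shows "coeffs_below N ((1 - monom 1 a) * P) (back_diff (int a) h)"
proof -
  have coeff_P: "coeff P j = of_int (h (int j))" if "j < N" for j
    using assms that by (simp add: coeffs_below_def)
  have neg: "h t = 0" if "t < 0" for t using assms that by (simp add: coeffs_below_def)
  have "coeff ((1 - monom 1 a) * P) j = of_int (back_diff (int a) h (int j))" if "j < N" for j
  proof (cases "a \<le> j")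
    case True
    then have "int (j - a) = int j - int a" by simp
    then show ?thesis using True that coeff_P[of j] coeff_P[of "j - a"]
      by (simp add: left_diff_distrib coeff_monom_mult back_diff_def)
  next
    case False
    then show ?thesis using that coeff_P[of j] neg[of "int j - int a"]
      by (simp add: left_diff_distrib coeff_monom_mult back_diff_def)
  qed
  moreover have "back_diff (int a) h t = 0" if "t < 0" for t
    using that neg[of t] neg[of "t - int a"] by (simp add: back_diff_def)
  ultimately show ?thesis by (simp add: coeffs_below_def)
qed

lemma coeffs_below_truncation:
  assumes "\<And>t. t < 0 \<Longrightarrow> G t = 0"
  shows "coeffs_below N (\<Sum>M<N. monom (of_int (G (int M))) M) G"
  using assms by (simp add: coeffs_below_def coeff_sum)

lemma coeff_geometric_mult:
  assumes "coeffs_below N Q h" "n < N"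
  shows "coeff ((\<Sum>i<p. monom 1 i) * Q) n = of_int (\<Sum>i<p. h (int n - int i))"
proof -
  have "coeff ((\<Sum>i<p. monom 1 i) * Q) n = (\<Sum>i<p. coeff (monom 1 i * Q) n)"
    by (simp add: sum_distrib_right coeff_sum)
  also have "\<dots> = (\<Sum>i<p. of_int (h (int n - int i)))"
  proof (intro sum.cong refl)
    fix i
    show "coeff (monom 1 i * Q) n = of_int (h (int n - int i))"
    proof (cases "i \<le> n")
      case True
      then have "int (n - i) = int n - int i" by simp
      then show ?thesis using True assms by (simp add: coeff_monom_mult coeffs_below_def)
    next
      case False
      then show ?thesis using assms by (simp add: coeff_monom_mult coeffs_below_def)
    qed
  qed
  finally show ?thesis by simp
qed

lemma coeff_mult_delta:
  fixes A B :: "complex poly"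
  assumes "\<And>j. j \<le> n \<Longrightarrow> coeff B j = of_bool (j = 0)"
  shows "coeff (A * B) n = coeff A n"
proof -
  have "coeff (A * B) n = (\<Sum>i\<le>n. coeff A i * coeff B (n - i))" by (rule coeff_mult)
  also have "\<dots> = (\<Sum>i\<le>n. if i = n then coeff A i else 0)"
    using assms by (intro sum.cong refl) auto
  also have "\<dots> = coeff A n" by simp
  finally show ?thesis .
qed

lemma coeff_from_inverse_series:
  fixes Phi :: "complex poly" and G :: "int \<Rightarrow> int" and p q r n :: nat
  assumes identity: "Phi * ((1 - monom 1 (p*q)) * (1 - monom 1 (p*r)) * (1 - monom 1 (q*r)))
       = (1 - monom 1 (p*q*r)) * ((\<Sum>i<p. monom 1 i) * (1 - monom 1 q) * (1 - monom 1 r))"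
    and G_neg: "\<And>t. t < 0 \<Longrightarrow> G t = 0"
    and G_inverse: "\<And>M. 0 \<le> M \<Longrightarrow> M < int (p*q*r) \<Longrightarrow>
      back_diff (int (p*q)) (back_diff (int (p*r)) (back_diff (int (q*r)) G)) M = of_bool (M = 0)"
    and n: "n < p*q*r"
  shows "coeff Phi n = of_int (\<Sum>i<p. back_diff (int q) (back_diff (int r) G) (int n - int i))"
proof -
  define N where "N = p*q*r"
  define C :: "complex poly" where "C = (\<Sum>M<N. monom (of_int (G (int M))) M)"
  define D :: "complex poly" where "D = (1 - monom 1 (p*q)) * (1 - monom 1 (p*r)) * (1 - monom 1 (q*r))"
  have C: "coeffs_below N C G" unfolding C_def using G_neg by (rule coeffs_below_truncation)
  have DC_diff: "coeffs_below N (D * C) (back_diff (int (p*q)) (back_diff (int (p*r)) (back_diff (int (q*r)) G)))"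
    unfolding D_def mult.assoc by (intro coeffs_below_one_minus_monom C)
  have DC: "coeff (D * C) j = of_bool (j = 0)" if "j < N" for j
  proof -
    have "int j < int (p*q*r)" using that unfolding N_def by (simp only: of_nat_less_iff)
    then have "back_diff (int (p*q)) (back_diff (int (p*r)) (back_diff (int (q*r)) G)) (int j) = of_bool (j = 0)"
      using G_inverse[of "int j"] by simp
    then show ?thesis using that DC_diff unfolding coeffs_below_def by (metis of_int_of_bool)
  qed
  define Num :: "complex poly" where "Num = (\<Sum>i<p. monom 1 i) * (1 - monom 1 q) * (1 - monom 1 r)"
  have "coeffs_below N ((1 - monom 1 q) * ((1 - monom 1 r) * C)) (back_diff (int q) (back_diff (int r) G))"
    by (intro coeffs_below_one_minus_monom C)
  then have "coeff ((\<Sum>i<p. monom 1 i) * ((1 - monom 1 q) * ((1 - monom 1 r) * C))) n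
      = of_int (\<Sum>i<p. back_diff (int q) (back_diff (int r) G) (int n - int i))"
    using n unfolding N_def by (rule coeff_geometric_mult)
  then have numerator: "coeff (Num * C) n = of_int (\<Sum>i<p. back_diff (int q) (back_diff (int r) G) (int n - int i))"
    unfolding Num_def by (simp only: mult.assoc)
  have "coeff Phi n = coeff (Phi * (D * C)) n"
    using n DC by (intro coeff_mult_delta[symmetric]) (simp add: N_def)
  also have "Phi * (D * C) = (1 - monom 1 N) * (Num * C)"
    using identity unfolding D_def N_def Num_def by (simp only: mult.assoc[symmetric])
  also have "coeff \<dots> n = coeff (Num * C) n"
    using n by (simp add: left_diff_distrib coeff_monom_mult N_def)
  finally show ?thesis using numerator by simp
qed

lemma mod_diff_cases:
  fixes x b P :: int
  assumes "0 \<le> x" "x < P" "0 \<le> b" "b \<le> P"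
  shows "(x - b) mod P = x - b + P * of_bool (x < b)"
proof (cases "b \<le> x")
  case True
  then show ?thesis using assms by simp
next
  case False
  then have "(x - b) mod P = (x - b + P) mod P" by simp
  also have "\<dots> = x - b + P" using assms False by (intro mod_pos_pos_trivial) auto
  finally show ?thesis using False by simp
qed

lemma mod_add_cases:
  fixes y a P :: int
  assumes "0 \<le> y" "y < P" "0 \<le> a" "a \<le> P"
  shows "(y + a) mod P = y + a - P * of_bool (P \<le> y + a)"
proof (cases "y + a < P")
  case True
  then show ?thesis using assms by simp
next
  case False
  then have "(y + a) mod P = (y + a - P) mod P" by (simp add: mod_diff_right_eq[symmetric])
  also have "\<dots> = y + a - P" using assms False by (intro mod_pos_pos_trivial) auto
  finally show ?thesis using False by simp
qed

text \<open>The four-term pattern into which every summand of the coefficient formula will be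
  brought: \<open>x\<close> and \<open>y\<close> are residues mod \<open>P\<close>, \<open>e \<in> {0, 1}\<close> a rounding error and \<open>s\<close> a
  threshold; the shifts by \<open>a\<close> and \<open>b\<close> mirror the shifts of the exponent by \<open>q\<close> and \<open>r\<close>.\<close>
definition window_term :: "int \<Rightarrow> int \<Rightarrow> int \<Rightarrow> int \<Rightarrow> int \<Rightarrow> int \<Rightarrow> int \<Rightarrow> int" where
  "window_term P a b s x y e =
     of_bool (x + y + e \<le> s) - of_bool ((x - b) mod P + y + e \<le> s)
     - of_bool ((x - a) mod P + (y + a) mod P + e \<le> s) + of_bool ((x - a - b) mod P + (y + a) mod P + e \<le> s)"

lemma window_term_upper:
  assumes "1 \<le> a" "a \<le> b" "a + b \<le> P" "0 \<le> x" "x < P" "0 \<le> y" "y < P" "0 \<le> e" "e \<le> 1" "0 \<le> s" "s < P"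
  shows "window_term P a b s x y e \<le> of_bool (x < a \<or> (a + b \<le> x \<and> s + 1 \<le> x \<and> x \<le> a + b + s))"
proof -
  have x_b: "(x - b) mod P = x - b + P * of_bool (x < b)" using assms by (intro mod_diff_cases) auto
  have x_a: "(x - a) mod P = x - a + P * of_bool (x < a)" using assms by (intro mod_diff_cases) auto
  have x_ab: "(x - a - b) mod P = x - a - b + P * of_bool (x < a + b)"
    using mod_diff_cases[of x P "a + b"] assms by (simp add: algebra_simps)
  have y_a: "(y + a) mod P = y + a - P * of_bool (P \<le> y + a)" using assms by (intro mod_add_cases) auto
  show ?thesis unfolding window_term_def x_b x_a x_ab y_a of_bool_def using assms
    by (cases "b \<le> x"; cases "a \<le> x"; cases "a + b \<le> x"; cases "y + a < P"; simp; linarith)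
qed

lemma window_term_lower:
  assumes "1 \<le> a" "a \<le> b" "a + b \<le> P" "0 \<le> x" "x < P" "0 \<le> y" "y < P" "0 \<le> e" "e \<le> 1" "0 \<le> s" "s < P"
  shows "window_term P a b s x y e
           \<ge> - of_bool (a \<le> x \<and> x < a + b \<and> s + b + 1 \<le> x + P \<and> (x \<le> a + s \<or> (b \<le> x \<and> x \<le> b + s)))"
proof -
  have x_b: "(x - b) mod P = x - b + P * of_bool (x < b)" using assms by (intro mod_diff_cases) auto
  have x_a: "(x - a) mod P = x - a + P * of_bool (x < a)" using assms by (intro mod_diff_cases) auto
  have x_ab: "(x - a - b) mod P = x - a - b + P * of_bool (x < a + b)"
    using mod_diff_cases[of x P "a + b"] assms by (simp add: algebra_simps)
  have y_a: "(y + a) mod P = y + a - P * of_bool (P \<le> y + a)" using assms by (intro mod_add_cases) auto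
  show ?thesis unfolding window_term_def x_b x_a x_ab y_a of_bool_def using assms
    by (cases "b \<le> x"; cases "a \<le> x"; cases "a + b \<le> x"; cases "y + a < P"; simp; linarith)
qed

text \<open>The reflection \<open>(a, b, x, y) \<mapsto> (P - a, P - b, x - a - b, y + a)\<close> permutes the four
  terms of the pattern; it reduces the case \<open>q' + r' > p\<close> to the case \<open>q' + r' \<le> p\<close>.\<close>
lemma window_term_reflect:
  fixes P a b s x y e :: int
  assumes "0 \<le> x" "x < P" "0 \<le> y" "y < P"
  shows "window_term P a b s x y e = window_term P (P - a) (P - b) s ((x - a - b) mod P) ((y + a) mod P) e"
proof -
  have 1: "((x - a - b) mod P - (P - b)) mod P = (x - a) mod P"
  proof -
    have "((x - a - b) mod P - (P - b)) mod P = ((x - a - b) - (P - b)) mod P"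
      by (simp add: mod_diff_left_eq)
    also have "\<dots> = (x - a + (-1) * P) mod P" by (simp add: algebra_simps)
    finally show ?thesis by (simp only: mod_mult_self1)
  qed
  have 2: "((x - a - b) mod P - (P - a)) mod P = (x - b) mod P"
  proof -
    have "((x - a - b) mod P - (P - a)) mod P = ((x - a - b) - (P - a)) mod P"
      by (simp add: mod_diff_left_eq)
    also have "\<dots> = (x - b + (-1) * P) mod P" by (simp add: algebra_simps)
    finally show ?thesis by (simp only: mod_mult_self1)
  qed
  have 3: "((y + a) mod P + (P - a)) mod P = y"
  proof -
    have "((y + a) mod P + (P - a)) mod P = ((y + a) + (P - a)) mod P"
      by (simp add: mod_add_left_eq)
    also have "\<dots> = (y + 1 * P) mod P" by (simp add: algebra_simps)
    finally show ?thesis using assms by (simp only: mod_mult_self1) simp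
  qed
  have 4: "((x - a - b) mod P - (P - a) - (P - b)) mod P = x"
  proof -
    have "((x - a - b) mod P - (P - a) - (P - b)) mod P = ((x - a - b) mod P - ((P - a) + (P - b))) mod P"
      by (simp add: algebra_simps)
    also have "\<dots> = ((x - a - b) - ((P - a) + (P - b))) mod P" by (simp add: mod_diff_left_eq)
    also have "\<dots> = (x + (-2) * P) mod P" by (simp add: algebra_simps)
    finally show ?thesis using assms by (simp only: mod_mult_self1) simp
  qed
  show ?thesis unfolding window_term_def 1 2 3 4 by simp
qed

lemma sum_le_card_of_bij:
  fixes f :: "nat \<Rightarrow> int" and X :: "nat \<Rightarrow> int"
  assumes bij: "bij_betw X {..<m} {0..<int m}" and le: "\<And>i. i < m \<Longrightarrow> f i \<le> of_bool (X i \<in> A)"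
  shows "sum f {..<m} \<le> int (card (A \<inter> {0..<int m}))"
proof -
  have "sum f {..<m} \<le> (\<Sum>i<m. of_bool (X i \<in> A))" using le by (intro sum_mono) auto
  also have "\<dots> = (\<Sum>x\<in>{0..<int m}. of_bool (x \<in> A))"
    by (rule sum.reindex_bij_betw[OF bij])
  also have "\<dots> = int (card (A \<inter> {0..<int m}))"
    by (simp add: Int_commute)
  finally show ?thesis .
qed

lemma sum_ge_card_of_bij:
  fixes f :: "nat \<Rightarrow> int" and X :: "nat \<Rightarrow> int"
  assumes bij: "bij_betw X {..<m} {0..<int m}" and ge: "\<And>i. i < m \<Longrightarrow> f i \<ge> - of_bool (X i \<in> A)"
  shows "sum f {..<m} \<ge> - int (card (A \<inter> {0..<int m}))"
proof -
  have "sum (\<lambda>i. - f i) {..<m} \<le> int (card (A \<inter> {0..<int m}))"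
    using ge by (intro sum_le_card_of_bij[OF bij]) force
  then show ?thesis by (simp add: sum_negf)
qed

lemma bij_betw_progression_mod:
  fixes P c c0 :: int
  assumes "0 < P" "coprime c P"
  shows "bij_betw (\<lambda>i. (c0 - int i * c) mod P) {..<nat P} {0..<P}"
proof -
  let ?f = "\<lambda>i. (c0 - int i * c) mod P"
  have inj: "inj_on ?f {..<nat P}"
  proof (rule inj_onI)
    fix i j assume ij: "i \<in> {..<nat P}" "j \<in> {..<nat P}" "?f i = ?f j"
    then have "P dvd ((int j - int i) * c)" by (simp add: mod_eq_dvd_iff algebra_simps)
    then have d: "P dvd (int j - int i)" using assms by (simp add: coprime_commute coprime_dvd_mult_left_iff)
    show "i = j"
    proof (rule ccontr)
      assume "i \<noteq> j"
      then have "\<bar>P\<bar> \<le> \<bar>int j - int i\<bar>" using d by (intro dvd_imp_le_int) auto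
      then show False using ij assms by auto
    qed
  qed
  have "?f ` {..<nat P} \<subseteq> {0..<P}" using assms by auto
  moreover have "card (?f ` {..<nat P}) = card {0..<P}" using card_image[OF inj] assms by simp
  ultimately have "?f ` {..<nat P} = {0..<P}" by (intro card_subset_eq) auto
  then show ?thesis using inj unfolding bij_betw_def by simp
qed

lemma card_upper_residues:
  fixes a b s P :: int
  assumes "1 \<le> a" "a \<le> b" "a + b \<le> P" "0 \<le> s" "s < P"
  shows "int (card ({x. x < a \<or> (a + b \<le> x \<and> s + 1 \<le> x \<and> x \<le> a + b + s)} \<inter> {0..<P}))
           \<le> min (2*a + b) (P - b)"
proof -
  let ?S = "{x. x < a \<or> (a + b \<le> x \<and> s + 1 \<le> x \<and> x \<le> a + b + s)} \<inter> {0..<P}"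
  let ?lo = "max (a + b) (s + 1)" and ?hi = "min (P - 1) (a + b + s)"
  have "?S \<subseteq> {0..<a} \<union> {?lo..?hi}" by auto
  then have "card ?S \<le> card ({0..<a} \<union> {?lo..?hi})" by (intro card_mono) auto
  also have "\<dots> \<le> card {0..<a} + card {?lo..?hi}" by (rule card_Un_le)
  finally have "card ?S \<le> nat a + nat (?hi - ?lo + 1)" by simp
  then have "int (card ?S) \<le> int (nat a + nat (?hi - ?lo + 1))" by (simp only: of_nat_le_iff)
  also have "\<dots> \<le> min (2*a + b) (P - b)" using assms by (simp add: min_def max_def; arith)
  finally show ?thesis .
qed

lemma card_lower_residues:
  fixes a b s P :: int
  assumes "1 \<le> a" "a \<le> b" "a + b \<le> P" "0 \<le> s" "s < P"
  shows "int (card ({x. a \<le> x \<and> x < a + b \<and> s + b + 1 \<le> x + P \<and> (x \<le> a + s \<or> (b \<le> x \<and> x \<le> b + s))}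
           \<inter> {0..<P})) \<le> min (P + 2*a - b) b"
proof -
  let ?S = "{x. a \<le> x \<and> x < a + b \<and> s + b + 1 \<le> x + P \<and> (x \<le> a + s \<or> (b \<le> x \<and> x \<le> b + s))} \<inter> {0..<P}"
  have "?S \<subseteq> {a..<a+b}" by auto
  then have le_b: "card ?S \<le> nat b" using card_mono[of "{a..<a+b}" ?S] by simp
  let ?lo = "max a (s + b + 1 - P)"
  have "?S \<subseteq> {?lo..a+s} \<union> {b..<a+b}" by auto
  then have "card ?S \<le> card ({?lo..a+s} \<union> {b..<a+b})" by (intro card_mono) auto
  also have "\<dots> \<le> card {?lo..a+s} + card {b..<a+b}" by (rule card_Un_le)
  finally have "card ?S \<le> nat (a + s - ?lo + 1) + nat a" by simp
  then have "int (card ?S) \<le> int (nat (a + s - ?lo + 1) + nat a)" by (simp only: of_nat_le_iff)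
  also have "\<dots> \<le> P + 2*a - b" using assms by (simp add: max_def; arith)
  finally show ?thesis using le_b assms by simp
qed

lemma window_sum_bounds:
  fixes P a b s :: int and X Y E :: "nat \<Rightarrow> int"
  assumes ab: "1 \<le> a" "a \<le> b" "a + b \<le> P" and s: "0 \<le> s" "s < P"
    and X: "bij_betw X {..<nat P} {0..<P}"
    and YE: "\<And>i. i < nat P \<Longrightarrow> 0 \<le> Y i \<and> Y i < P \<and> 0 \<le> E i \<and> E i \<le> 1"
  shows "(\<Sum>i<nat P. window_term P a b s (X i) (Y i) (E i)) \<le> min (2*a + b) (P - b)"
    and "(\<Sum>i<nat P. window_term P a b s (X i) (Y i) (E i)) \<ge> - min (P + 2*a - b) b"
proof -
  have P: "int (nat P) = P" using ab by simp
  have X': "bij_betw X {..<nat P} {0..<int (nat P)}" using X by (simp only: P)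
  have X_range: "0 \<le> X i \<and> X i < P" if "i < nat P" for i
    using bij_betwE[OF X] that by auto
  have "(\<Sum>i<nat P. window_term P a b s (X i) (Y i) (E i))
      \<le> int (card ({x. x < a \<or> (a + b \<le> x \<and> s + 1 \<le> x \<and> x \<le> a + b + s)} \<inter> {0..<int (nat P)}))"
    using window_term_upper ab s X_range YE by (intro sum_le_card_of_bij[OF X']) auto
  also have "\<dots> \<le> min (2*a + b) (P - b)" unfolding P using ab s by (rule card_upper_residues)
  finally show "(\<Sum>i<nat P. window_term P a b s (X i) (Y i) (E i)) \<le> min (2*a + b) (P - b)" .
  have "- int (card ({x. a \<le> x \<and> x < a + b \<and> s + b + 1 \<le> x + P \<and> (x \<le> a + s \<or> (b \<le> x \<and> x \<le> b + s))}
      \<inter> {0..<int (nat P)})) \<le> (\<Sum>i<nat P. window_term P a b s (X i) (Y i) (E i))"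
    using window_term_lower ab s X_range YE by (intro sum_ge_card_of_bij[OF X']) auto
  moreover have "int (card ({x. a \<le> x \<and> x < a + b \<and> s + b + 1 \<le> x + P \<and> (x \<le> a + s \<or> (b \<le> x \<and> x \<le> b + s))}
      \<inter> {0..<int (nat P)})) \<le> min (P + 2*a - b) b" unfolding P using ab s by (rule card_lower_residues)
  ultimately show "(\<Sum>i<nat P. window_term P a b s (X i) (Y i) (E i)) \<ge> - min (P + 2*a - b) b" by linarith
qed

lemma zdiv_less_iff: "0 < (q::int) \<Longrightarrow> a div q < c \<longleftrightarrow> a < c * q"
proof
  assume h: "0 < q" "a div q < c"
  have "a = q * (a div q) + a mod q" by simp
  moreover have "a mod q < q" using h by simp
  moreover have "q * (a div q) \<le> q * (c - 1)" using h by (intro mult_left_mono) auto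
  moreover have "q * (c - 1) = c * q - q" by (simp add: algebra_simps)
  ultimately show "a < c * q" by linarith
next
  assume h: "0 < q" "a < c * q"
  show "a div q < c"
  proof (rule ccontr)
    assume "\<not> a div q < c"
    then have "q * c \<le> q * (a div q)" using h by (intro mult_left_mono) auto
    moreover have "a = q * (a div q) + a mod q" by simp
    moreover have "a mod q \<ge> 0" using h by simp
    moreover have "q * c = c * q" by simp
    ultimately show False using h by linarith
  qed
qed

lemma mult_le_iff_nonpos:
  fixes p z j :: int
  assumes "0 < p" "0 \<le> z" "z < p"
  shows "p * j \<le> z \<longleftrightarrow> j \<le> 0"
proof
  assume "p * j \<le> z"
  show "j \<le> 0"
  proof (rule ccontr)
    assume "\<not> j \<le> 0"
    then have "p * 1 \<le> p * j" using assms by (intro mult_left_mono) auto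
    then show False using assms \<open>p * j \<le> z\<close> by linarith
  qed
next
  assume "j \<le> 0"
  then have "p * j \<le> p * 0" using assms by (intro mult_left_mono) auto
  then show "p * j \<le> z" using assms by simp
qed

lemma mult_le_sum_iff:
  fixes p z b j :: int
  assumes "0 < p" "0 \<le> z" "z < p" "0 \<le> b" "b < p"
  shows "p * j \<le> z + b \<longleftrightarrow> j + of_bool (z + b < p) - 1 \<le> 0"
proof (cases "z + b < p")
  case True
  then show ?thesis using mult_le_iff_nonpos[of p "z + b" j] assms by simp
next
  case False
  then have "p * (j - 1) \<le> z + b - p \<longleftrightarrow> j - 1 \<le> 0"
    using assms by (intro mult_le_iff_nonpos) auto
  then show ?thesis using False by (simp add: algebra_simps)
qed

text \<open>If \<open>x + y + e - s = P m - z\<close>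
  with \<open>z \<in> [0, P)\<close>, each comparison in the pattern is of the form \<open>m + (shift corrections) \<le> 0\<close>;
  in the application the four terms become the values of \<open>chi\<close> at \<open>k, k - q, k - r, k - r - q\<close>.\<close>
lemma window_term_wraps:
  fixes P a b s x y z e m :: int
  assumes x: "0 \<le> x" "x < P" and y: "0 \<le> y" "y < P" and z: "0 \<le> z" "z < P"
    and a: "1 \<le> a" "a < P" and b: "1 \<le> b" "b < P"
    and base: "x + y + e - s = P * m - z"
  shows "window_term P a b s x y e
     = of_bool (m \<le> 0) - of_bool (m + of_bool (x < b) + of_bool (z + b < P) - 1 \<le> 0)
       - of_bool (m + of_bool (x < a) - of_bool (P \<le> y + a) \<le> 0)
       + of_bool (m + of_bool (x < a) + of_bool ((x - a) mod P < b) - of_bool (P \<le> y + a)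
                  + of_bool (z + b < P) - 1 \<le> 0)"
proof -
  have P: "0 < P" using a by simp
  define x_a where "x_a = (x - a) mod P"
  have x_a: "x_a = x - a + P * of_bool (x < a)" unfolding x_a_def using x a by (intro mod_diff_cases) auto
  have x_a_range: "0 \<le> x_a" "x_a < P" unfolding x_a_def using P by auto
  have y_a: "(y + a) mod P = y + a - P * of_bool (P \<le> y + a)" using y a by (intro mod_add_cases) auto
  have x_b: "(x - b) mod P = x - b + P * of_bool (x < b)" using x b by (intro mod_diff_cases) auto
  have "(x - a - b) mod P = (x_a - b) mod P" unfolding x_a_def by (simp add: mod_diff_left_eq)
  also have "\<dots> = x_a - b + P * of_bool (x_a < b)" using x_a_range b by (intro mod_diff_cases) auto
  finally have x_ab: "(x - a - b) mod P = x_a - b + P * of_bool (x_a < b)" .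
  have c1: "x + y + e \<le> s \<longleftrightarrow> m \<le> 0"
  proof -
    have "x + y + e \<le> s \<longleftrightarrow> P * m \<le> z" using base by linarith
    then show ?thesis using mult_le_iff_nonpos[OF P z, of m] by simp
  qed
  have c2: "(x - b) mod P + y + e \<le> s \<longleftrightarrow> m + of_bool (x < b) + of_bool (z + b < P) - 1 \<le> 0"
  proof -
    have "(x - b) mod P + y + e \<le> s \<longleftrightarrow> P * (m + of_bool (x < b)) \<le> z + b"
      unfolding x_b using base by (simp add: distrib_left) linarith
    then show ?thesis using mult_le_sum_iff[OF P z] b by simp
  qed
  have c3: "(x - a) mod P + (y + a) mod P + e \<le> s \<longleftrightarrow> m + of_bool (x < a) - of_bool (P \<le> y + a) \<le> 0"
  proof -
    have "(x - a) mod P + (y + a) mod P + e \<le> s \<longleftrightarrow> P * (m + of_bool (x < a) - of_bool (P \<le> y + a)) \<le> z"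
      unfolding x_a_def[symmetric] x_a y_a using base by (simp add: algebra_simps) linarith
    then show ?thesis using mult_le_iff_nonpos[OF P z] by simp
  qed
  have c4: "(x - a - b) mod P + (y + a) mod P + e \<le> s
      \<longleftrightarrow> m + of_bool (x < a) + of_bool (x_a < b) - of_bool (P \<le> y + a) + of_bool (z + b < P) - 1 \<le> 0"
  proof -
    have "(x - a - b) mod P + (y + a) mod P + e \<le> s
        \<longleftrightarrow> P * (m + of_bool (x < a) + of_bool (x_a < b) - of_bool (P \<le> y + a)) \<le> z + b"
      unfolding x_ab x_a y_a using base by (simp add: algebra_simps) linarith
    then show ?thesis using mult_le_sum_iff[OF P z] b by simp
  qed
  show ?thesis unfolding window_term_def c1 c2 c3 c4 x_a_def ..
qed

lemma mod_mult_shift: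
  fixes k c u d m :: int
  assumes "[c * u = d] (mod m)"
  shows "((k - c) * u) mod m = ((k * u) mod m - d) mod m"
proof -
  have "((k - c) * u) mod m = (k * u - c * u) mod m" by (simp add: algebra_simps)
  also have "\<dots> = ((k * u) mod m - (c * u) mod m) mod m" by (simp add: mod_diff_eq)
  also have "(c * u) mod m = d mod m" using assms by (simp add: cong_def)
  finally show ?thesis by (simp add: mod_diff_right_eq)
qed

lemma coordinate_cong:
  fixes k c u m :: int
  assumes "[c * u = 1] (mod m)"
  shows "[(k * u) mod m * c = k] (mod m)"
proof -
  have "[(k * u) mod m * c = k * u * c] (mod m)" by (simp add: cong_def mod_mult_left_eq)
  also have "k * u * c = k * (c * u)" by (simp add: algebra_simps)
  also have "[k * (c * u) = k * 1] (mod m)" using assms by (intro cong_mult cong_refl)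
  finally show ?thesis by simp
qed

lemma dvd_product_of_pairwise_coprime:
  fixes p q r a :: int
  assumes "coprime p q" "coprime p r" "coprime q r" "p dvd a" "q dvd a" "r dvd a"
  shows "p * q * r dvd a"
proof -
  have "p * q dvd a" using assms by (intro divides_mult) auto
  moreover have "coprime (p * q) r" using assms by simp
  ultimately show ?thesis using assms by (intro divides_mult) auto
qed

text \<open>If \<open>u \<in> [1, p)\<close> inverts \<open>r\<close> modulo \<open>p\<close> and \<open>\<rho> \<in> [0, r)\<close> inverts \<open>p\<close> modulo \<open>r\<close>,
  then \<open>u r + \<rho> p = p r + 1\<close>: both sides agree modulo \<open>p r\<close> and lie in \<open>(p r, 2 p r)\<close>.\<close>
lemma complementary_inverses:
  fixes p r u \<rho> :: int
  assumes "coprime p r" "0 < p" "1 < r" "1 \<le> u" "u < p" "[r * u = 1] (mod p)"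
    and "0 \<le> \<rho>" "\<rho> < r" "[p * \<rho> = 1] (mod r)"
  shows "u * r + \<rho> * p = p * r + 1"
proof -
  have "p dvd (r * u - 1) + p * \<rho>" using assms(6) by (simp add: cong_iff_dvd_diff dvd_diff_commute)
  then have "p dvd u * r + \<rho> * p - 1" by (simp add: algebra_simps)
  moreover have "r dvd (p * \<rho> - 1) + r * u" using assms(9) by (simp add: cong_iff_dvd_diff dvd_diff_commute)
  then have "r dvd u * r + \<rho> * p - 1" by (simp add: algebra_simps)
  ultimately have "p * r dvd u * r + \<rho> * p - 1" using assms(1) by (intro divides_mult)
  then obtain j where j: "u * r + \<rho> * p - 1 = p * r * j" by blast
  have "u * r \<le> (p - 1) * r" "\<rho> * p \<le> (r - 1) * p" using assms by (intro mult_right_mono; simp)+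
  then have "u * r \<le> p * r - r" "\<rho> * p \<le> p * r - p" by (simp_all add: algebra_simps)
  moreover have "1 * r \<le> u * r" "0 \<le> \<rho> * p" using assms by (intro mult_right_mono mult_nonneg_nonneg; simp)+
  ultimately have "0 < p * r * j" "p * r * j < p * r * 2" using j assms(2,3) by linarith+
  moreover have "0 < p * r" using assms(2,3) by simp
  ultimately have "0 < j" "j < 2" by (simp_all add: zero_less_mult_iff mult_less_cancel_left)
  then have "j = 1" by simp
  then show ?thesis using j by simp
qed

lemma rounding_range:
  fixes p q y :: int
  assumes "0 < p" "0 \<le> y" "y < q"
  shows "0 \<le> (p * y) div q" "(p * y) div q < p"
  using assms zdiv_less_iff[of q "p * y" p] by (auto simp: pos_imp_zdiv_nonneg_iff)

lemma rounding_less_iff: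
  fixes p q a \<rho> y :: int
  assumes "coprime p q" "0 < p" "0 \<le> y" "y < q" "a < p" "a * q + \<rho> * p = p * q + 1"
  shows "y < \<rho> \<longleftrightarrow> (p * y) div q + a < p"
proof -
  have "y < \<rho> \<longleftrightarrow> p * y < p * \<rho>" using assms(2) by simp
  also have "\<dots> \<longleftrightarrow> p * y \<le> q * (p - a)"
  proof -
    have "p * \<rho> = p * q + 1 - a * q" "q * (p - a) = p * q - a * q"
      using assms(6) by (simp_all add: algebra_simps)
    then show ?thesis by linarith
  qed
  also have "\<dots> \<longleftrightarrow> p * y < q * (p - a)"
  proof -
    have "p * y \<noteq> q * (p - a)"
    proof
      assume h: "p * y = q * (p - a)"
      then have "q dvd y" using assms(1) by (metis coprime_commute coprime_dvd_mult_right_iff dvd_triv_left)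
      then have "y = 0" using assms(3,4) zdvd_not_zless[of y q] by (cases "y = 0") auto
      then show False using h assms(3-5) by simp
    qed
    then show ?thesis by auto
  qed
  also have "\<dots> \<longleftrightarrow> (p * y) div q < p - a"
    using zdiv_less_iff[of q "p * y" "p - a"] assms by (simp add: mult.commute)
  finally show ?thesis by linarith
qed

locale ternary =
  fixes p q r q' r' pr_inv pq_inv :: int
  assumes p_ge_2: "2 \<le> p" and p_less_q: "p < q" and p_less_r: "p < r"
    and coprime_pq: "coprime p q" and coprime_pr: "coprime p r" and coprime_qr: "coprime q r"
    and q'_range: "1 \<le> q'" "q' < p" and q'_inverse: "[q * q' = 1] (mod p)"
    and r'_range: "1 \<le> r'" "r' < p" and r'_inverse: "[r * r' = 1] (mod p)"
    and pr_inverse: "[p * r * pr_inv = 1] (mod q)" and pq_inverse: "[p * q * pq_inv = 1] (mod r)"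
begin

definition N :: int where "N = p * q * r"

text \<open>By the Chinese remainder theorem every \<open>k\<close> is congruent modulo \<open>N\<close> to exactly one
  \<open>rep k = x q r + y p r + z p q\<close> with \<open>0 \<le> x < p\<close>, \<open>0 \<le> y < q\<close>, \<open>0 \<le> z < r\<close>;
  the coordinates are \<open>x = k q' r' mod p\<close> etc.  The number of wrap-arounds \<open>(rep k - k) / N\<close>
  is \<open>wrap k\<close>.\<close>
definition cx :: "int \<Rightarrow> int" where "cx k = (k * (q' * r')) mod p"
definition cy :: "int \<Rightarrow> int" where "cy k = (k * pr_inv) mod q"
definition cz :: "int \<Rightarrow> int" where "cz k = (k * pq_inv) mod r"
definition rep :: "int \<Rightarrow> int" where "rep k = cx k * (q * r) + cy k * (p * r) + cz k * (p * q)"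
definition wrap :: "int \<Rightarrow> int" where "wrap k = (rep k - k) div N"

text \<open>\<open>chi k = 1\<close> iff \<open>rep k \<le> k\<close>; by uniqueness of the representation this says that \<open>k\<close> is a
  non-negative integer combination of \<open>q r, p r, p q\<close>.  What is used below is that \<open>chi\<close> inverts
  \<open>(1 - x\<^sup>q\<^sup>r)(1 - x\<^sup>p\<^sup>r)(1 - x\<^sup>p\<^sup>q)\<close> modulo \<open>x\<^sup>N\<close>.\<close>
definition chi :: "int \<Rightarrow> int" where "chi k = of_bool (rep k \<le> k)"

text \<open>The steps of the coordinates \<open>y\<close>, \<open>z\<close> when \<open>k\<close> decreases by \<open>r\<close>, resp.\ \<open>q\<close>.\<close>
definition rho_q :: int where "rho_q = (r * pr_inv) mod q"
definition rho_r :: int where "rho_r = (q * pq_inv) mod r"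

lemma pos: "0 < p" "0 < q" "0 < r" "0 < N"
  using p_ge_2 p_less_q p_less_r by (auto simp: N_def)

lemma coordinate_ranges: "0 \<le> cx k" "cx k < p" "0 \<le> cy k" "cy k < q" "0 \<le> cz k" "cz k < r"
  using pos by (auto simp: cx_def cy_def cz_def)

lemma rho_ranges: "0 \<le> rho_q" "rho_q < q" "0 \<le> rho_r" "rho_r < r"
  using pos by (auto simp: rho_q_def rho_r_def)

lemma rep_nonneg: "0 \<le> rep k"
  using coordinate_ranges pos by (simp add: rep_def)

lemma rep_eq: "rep k = k + N * wrap k"
proof -
  have qr_inverse: "[q * r * (q' * r') = 1] (mod p)"
    using cong_mult[OF q'_inverse r'_inverse] by (simp add: algebra_simps)
  have "[cx k * (q * r) + (cy k * (p * r) + cz k * (p * q)) = k + 0] (mod p)"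
    unfolding cx_def by (intro cong_add coordinate_cong[OF qr_inverse]) (simp add: cong_0_iff)
  then have "p dvd rep k - k" by (simp add: rep_def add.assoc cong_iff_dvd_diff dvd_diff_commute)
  moreover have "[cy k * (p * r) + (cx k * (q * r) + cz k * (p * q)) = k + 0] (mod q)"
    unfolding cy_def using pr_inverse by (intro cong_add coordinate_cong) (simp_all add: cong_0_iff)
  then have "q dvd rep k - k" by (simp add: rep_def algebra_simps cong_iff_dvd_diff dvd_diff_commute)
  moreover have "[cz k * (p * q) + (cx k * (q * r) + cy k * (p * r)) = k + 0] (mod r)"
    unfolding cz_def using pq_inverse by (intro cong_add coordinate_cong) (simp_all add: cong_0_iff)
  then have "r dvd rep k - k" by (simp add: rep_def algebra_simps cong_iff_dvd_diff dvd_diff_commute)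
  ultimately have "N dvd rep k - k" unfolding N_def
    using coprime_pq coprime_pr coprime_qr by (intro dvd_product_of_pairwise_coprime)
  then show ?thesis unfolding wrap_def by (simp add: dvd_div_mult_self algebra_simps)
qed

lemma chi_wrap: "chi k = of_bool (wrap k \<le> 0)"
  using rep_eq[of k] pos by (simp add: chi_def mult_le_0_iff)

lemma chi_neg: "k < 0 \<Longrightarrow> chi k = 0"
  using rep_nonneg[of k] by (simp add: chi_def)

lemma wrap_nonneg: "0 \<le> k \<Longrightarrow> k < N \<Longrightarrow> 0 \<le> wrap k"
proof -
  assume "0 \<le> k" "k < N"
  then have "N * (-1) < N * wrap k" using rep_eq[of k] rep_nonneg[of k] by simp
  moreover have "0 \<le> N" using pos by simp
  ultimately have "-1 < wrap k" by (rule mult_left_less_imp_less)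
  then show ?thesis by simp
qed

lemma rho_q_eq: "q' * q + rho_q * p = p * q + 1"
proof (rule complementary_inverses)
  have "[p * r * pr_inv = p * rho_q] (mod q)" by (simp add: rho_q_def cong_def mod_mult_right_eq algebra_simps)
  then show "[p * rho_q = 1] (mod q)" using pr_inverse by (metis cong_sym cong_trans)
qed (use coprime_pq p_ge_2 p_less_q q'_range q'_inverse rho_ranges in \<open>auto simp: mult.commute\<close>)

lemma rho_r_eq: "r' * r + rho_r * p = p * r + 1"
proof (rule complementary_inverses)
  have "[p * q * pq_inv = p * rho_r] (mod r)" by (simp add: rho_r_def cong_def mod_mult_right_eq algebra_simps)
  then show "[p * rho_r = 1] (mod r)" using pq_inverse by (metis cong_sym cong_trans)
qed (use coprime_pr p_ge_2 p_less_r r'_range r'_inverse rho_ranges in \<open>auto simp: mult.commute\<close>)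

lemma cx_shift: "[c * (q' * r') = d] (mod p) \<Longrightarrow> cx (k - c) = (cx k - d) mod p"
  unfolding cx_def by (rule mod_mult_shift)

lemma cy_shift: "[c * pr_inv = d] (mod q) \<Longrightarrow> cy (k - c) = (cy k - d) mod q"
  unfolding cy_def by (rule mod_mult_shift)

lemma cz_shift: "[c * pq_inv = d] (mod r) \<Longrightarrow> cz (k - c) = (cz k - d) mod r"
  unfolding cz_def by (rule mod_mult_shift)

lemma qr_inverse: "[q * r * (q' * r') = 1] (mod p)"
  using cong_mult[OF q'_inverse r'_inverse] by (simp add: algebra_simps)

lemma cx_shifts:
  "cx (k - q) = (cx k - r') mod p" "cx (k - r) = (cx k - q') mod p" "cx (k - q * r) = (cx k - 1) mod p"
  "cx (k - p * q) = cx k" "cx (k - p * r) = cx k"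
proof -
  show "cx (k - q) = (cx k - r') mod p"
    using cong_mult[OF q'_inverse cong_refl[of r']] by (intro cx_shift) (simp add: algebra_simps)
  show "cx (k - r) = (cx k - q') mod p"
    using cong_mult[OF r'_inverse cong_refl[of q']] by (intro cx_shift) (simp add: algebra_simps)
  show "cx (k - q * r) = (cx k - 1) mod p" using qr_inverse by (rule cx_shift)
  show "cx (k - p * q) = cx k" "cx (k - p * r) = cx k"
    using cx_shift[of "p * _" 0 k] coordinate_ranges[of k] by (simp_all add: cong_0_iff)
qed

lemma cy_shifts:
  "cy (k - r) = (cy k - rho_q) mod q" "cy (k - p * r) = (cy k - 1) mod q"
  "cy (k - q) = cy k" "cy (k - p * q) = cy k" "cy (k - q * r) = cy k"
proof -
  show "cy (k - r) = (cy k - rho_q) mod q" by (rule cy_shift) (simp add: rho_q_def cong_def)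
  show "cy (k - p * r) = (cy k - 1) mod q" using pr_inverse by (rule cy_shift)
  show "cy (k - q) = cy k" "cy (k - p * q) = cy k" "cy (k - q * r) = cy k"
    using cy_shift[of _ 0 k] coordinate_ranges[of k] by (simp_all add: cong_0_iff)
qed

lemma cz_shifts:
  "cz (k - q) = (cz k - rho_r) mod r" "cz (k - p * q) = (cz k - 1) mod r"
  "cz (k - r) = cz k" "cz (k - p * r) = cz k" "cz (k - q * r) = cz k"
proof -
  show "cz (k - q) = (cz k - rho_r) mod r" by (rule cz_shift) (simp add: rho_r_def cong_def)
  show "cz (k - p * q) = (cz k - 1) mod r" using pq_inverse by (rule cz_shift)
  show "cz (k - r) = cz k" "cz (k - p * r) = cz k" "cz (k - q * r) = cz k"
    using cz_shift[of _ 0 k] coordinate_ranges[of k] by (simp_all add: cong_0_iff)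
qed

lemma wrap_shift:
  assumes "rep (k - c) = rep k - c + N * j"
  shows "wrap (k - c) = wrap k + j"
proof -
  have "N * wrap (k - c) = N * (wrap k + j)"
    using assms rep_eq[of k] rep_eq[of "k - c"] by (simp add: algebra_simps)
  then show ?thesis using pos by simp
qed

lemma wrap_shift_q: "wrap (k - q) = wrap k + (of_bool (cx k < r') + of_bool (cz k < rho_r) - 1)"
proof (rule wrap_shift)
  have x: "cx (k - q) = cx k - r' + p * of_bool (cx k < r')"
    unfolding cx_shifts using coordinate_ranges r'_range by (intro mod_diff_cases) auto
  have z: "cz (k - q) = cz k - rho_r + r * of_bool (cz k < rho_r)"
    unfolding cz_shifts using coordinate_ranges rho_ranges by (intro mod_diff_cases) auto
  have "r' * (q * r) + rho_r * (p * q) = N + q"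
    using arg_cong[OF rho_r_eq, of "(*) q"] by (simp add: N_def algebra_simps)
  moreover have "rep (k - q) = rep k - (r' * (q * r) + rho_r * (p * q))
      + N * (of_bool (cx k < r') + of_bool (cz k < rho_r))"
    unfolding rep_def x z cy_shifts by (simp add: N_def algebra_simps)
  ultimately show "rep (k - q) = rep k - q + N * (of_bool (cx k < r') + of_bool (cz k < rho_r) - 1)"
    by (simp add: algebra_simps)
qed

lemma wrap_shift_r: "wrap (k - r) = wrap k + (of_bool (cx k < q') + of_bool (cy k < rho_q) - 1)"
proof (rule wrap_shift)
  have x: "cx (k - r) = cx k - q' + p * of_bool (cx k < q')"
    unfolding cx_shifts using coordinate_ranges q'_range by (intro mod_diff_cases) auto
  have y: "cy (k - r) = cy k - rho_q + q * of_bool (cy k < rho_q)"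
    unfolding cy_shifts using coordinate_ranges rho_ranges by (intro mod_diff_cases) auto
  have "q' * (q * r) + rho_q * (p * r) = N + r"
    using arg_cong[OF rho_q_eq, of "(*) r"] by (simp add: N_def algebra_simps)
  moreover have "rep (k - r) = rep k - (q' * (q * r) + rho_q * (p * r))
      + N * (of_bool (cx k < q') + of_bool (cy k < rho_q))"
    unfolding rep_def x y cz_shifts by (simp add: N_def algebra_simps)
  ultimately show "rep (k - r) = rep k - r + N * (of_bool (cx k < q') + of_bool (cy k < rho_q) - 1)"
    by (simp add: algebra_simps)
qed

text \<open>Shifting by \<open>q r\<close> (resp.\ \<open>p r\<close>, \<open>p q\<close>) decreases one coordinate by \<open>1\<close>; the only
  possible wrap-around is at \<open>0\<close>.\<close>
lemma wrap_shift_products: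
  "wrap (k - q * r) = wrap k + of_bool (cx k = 0)"
  "wrap (k - p * r) = wrap k + of_bool (cy k = 0)"
  "wrap (k - p * q) = wrap k + of_bool (cz k = 0)"
proof -
  have unwrap: "(c - 1) mod m = c - 1 + m * of_bool (c = 0)" if "0 \<le> c" "c < m" for c m :: int
    using mod_diff_cases[of c m 1] that by auto
  have x: "cx (k - q * r) = cx k - 1 + p * of_bool (cx k = 0)"
    unfolding cx_shifts using coordinate_ranges by (intro unwrap)
  have y: "cy (k - p * r) = cy k - 1 + q * of_bool (cy k = 0)"
    unfolding cy_shifts using coordinate_ranges by (intro unwrap)
  have z: "cz (k - p * q) = cz k - 1 + r * of_bool (cz k = 0)"
    unfolding cz_shifts using coordinate_ranges by (intro unwrap)
  show "wrap (k - q * r) = wrap k + of_bool (cx k = 0)"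
    by (rule wrap_shift) (simp add: rep_def x cy_shifts cz_shifts N_def algebra_simps)
  show "wrap (k - p * r) = wrap k + of_bool (cy k = 0)"
    by (rule wrap_shift) (simp add: rep_def y cx_shifts cz_shifts N_def algebra_simps)
  show "wrap (k - p * q) = wrap k + of_bool (cz k = 0)"
    by (rule wrap_shift) (simp add: rep_def z cx_shifts cy_shifts N_def algebra_simps)
qed

text \<open>\<open>chi\<close> inverts \<open>(1 - x\<^sup>p\<^sup>q)(1 - x\<^sup>p\<^sup>r)(1 - x\<^sup>q\<^sup>r)\<close> modulo \<open>x\<^sup>N\<close>: the threefold difference is
  \<open>[M = 0]\<close>, because \<open>M = 0\<close> is the only \<open>M \<in> [0, N)\<close> with \<open>rep M = M\<close> and all coordinates \<open>0\<close>.\<close>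
lemma chi_inverse_series:
  assumes "0 \<le> M" "M < N"
  shows "back_diff (p * q) (back_diff (p * r) (back_diff (q * r) chi)) M = of_bool (M = 0)"
proof -
  define m where "m = wrap M"
  define A :: int where "A = of_bool (cx M = 0)"
  define B :: int where "B = of_bool (cy M = 0)"
  define C :: int where "C = of_bool (cz M = 0)"
  have "0 \<le> m" unfolding m_def using assms by (rule wrap_nonneg)
  have zero: "M = 0 \<longleftrightarrow> m = 0 \<and> A = 1 \<and> B = 1 \<and> C = 1"
  proof
    assume "M = 0"
    then show "m = 0 \<and> A = 1 \<and> B = 1 \<and> C = 1"
      using rep_eq[of 0] pos by (simp add: m_def A_def B_def C_def cx_def cy_def cz_def rep_def)
  next
    assume "m = 0 \<and> A = 1 \<and> B = 1 \<and> C = 1"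
    then have "rep M = 0" "wrap M = 0"
      using coordinate_ranges[of M] by (simp_all add: m_def A_def B_def C_def rep_def)
    then show "M = 0" using rep_eq[of M] by simp
  qed
  have bits: "A \<in> {0, 1}" "B \<in> {0, 1}" "C \<in> {0, 1}" by (simp_all add: A_def B_def C_def)
  show ?thesis
    unfolding back_diff_def chi_wrap wrap_shift_products cx_shifts cy_shifts cz_shifts
      m_def[symmetric] A_def[symmetric] B_def[symmetric] C_def[symmetric] zero
    using \<open>0 \<le> m\<close> bits by auto
qed

text \<open>Rounded coordinates \<open>\<lfloor>p y / q\<rfloor>\<close>, \<open>\<lfloor>p z / r\<rfloor>\<close> in \<open>[0, p)\<close>; the wrap-arounds of \<open>y\<close> and
  \<open>z\<close> under the shifts by \<open>r\<close> and \<open>q\<close> can be read off from them.\<close>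
definition ry :: "int \<Rightarrow> int" where "ry k = (p * cy k) div q"
definition rz :: "int \<Rightarrow> int" where "rz k = (p * cz k) div r"

lemma rounded_ranges: "0 \<le> ry k" "ry k < p" "0 \<le> rz k" "rz k < p"
  unfolding ry_def rz_def using pos coordinate_ranges by (auto intro: rounding_range)

lemma cy_less_rho_q_iff: "cy k < rho_q \<longleftrightarrow> ry k + q' < p"
  unfolding ry_def using coprime_pq pos coordinate_ranges q'_range rho_q_eq by (intro rounding_less_iff) auto

lemma cz_less_rho_r_iff: "cz k < rho_r \<longleftrightarrow> rz k + r' < p"
  unfolding rz_def using coprime_pr pos coordinate_ranges r'_range rho_r_eq by (intro rounding_less_iff) auto

text \<open>The rounding error for \<open>k\<close> in a window \<open>(n - p, n]\<close>, relative to \<open>s = \<lfloor>n / q r\<rfloor>\<close>.\<close>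
definition err :: "int \<Rightarrow> int \<Rightarrow> int" where "err s k = p * wrap k + s - cx k - ry k - rz k"

lemma err_range:
  assumes "0 \<le> n" "n - p < k" "k \<le> n"
  shows "0 \<le> err (n div (q * r)) k" "err (n div (q * r)) k \<le> 1"
proof -
  define s where "s = n div (q * r)"
  define \<eta> where "\<eta> = (p * cy k) mod q"
  define \<zeta> where "\<zeta> = (p * cz k) mod r"
  have y: "p * cy k = q * ry k + \<eta>" unfolding \<eta>_def ry_def by simp
  have z: "p * cz k = r * rz k + \<zeta>" unfolding \<zeta>_def rz_def by simp
  have \<eta>\<zeta>: "0 \<le> \<eta>" "\<eta> < q" "0 \<le> \<zeta>" "\<zeta> < r" using pos unfolding \<eta>_def \<zeta>_def by auto
  have "rep k = (q * r) * (cx k + ry k + rz k) + r * \<eta> + q * \<zeta>"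
  proof -
    have "rep k = cx k * (q * r) + r * (p * cy k) + q * (p * cz k)" unfolding rep_def by (simp add: algebra_simps)
    then show ?thesis unfolding y z by (simp add: algebra_simps)
  qed
  then have key: "(q * r) * err s k = (q * r) * s - k + r * \<eta> + q * \<zeta>"
    using rep_eq[of k] unfolding err_def N_def by (simp add: algebra_simps)
  have n: "n = (q * r) * s + n mod (q * r)" using assms unfolding s_def by simp
  have n_mod: "0 \<le> n mod (q * r)" "n mod (q * r) < q * r" using pos by auto
  have qr: "0 \<le> q * r" using pos by simp
  have "(q * r) * err s k > (q * r) * (-1)"
  proof -
    have "r * \<eta> \<ge> 0" "q * \<zeta> \<ge> 0" using \<eta>\<zeta> pos by auto
    then have "(q * r) * err s k \<ge> (q * r) * s - k" using key by linarith
    moreover have "(q * r) * s - k \<ge> (q * r) * s - n" using assms by linarith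
    moreover have "(q * r) * s - n > - (q * r)" using n n_mod by linarith
    ultimately show ?thesis by simp
  qed
  then have "err s k > -1" using qr by (rule mult_left_less_imp_less)
  then show "0 \<le> err (n div (q * r)) k" unfolding s_def by simp
  have "(q * r) * err s k < (q * r) * 2"
  proof -
    have "r * \<eta> \<le> r * (q - 1)" "q * \<zeta> \<le> q * (r - 1)" using \<eta>\<zeta> pos by (intro mult_left_mono; simp)+
    moreover have "r * (q - 1) + q * (r - 1) = 2 * (q * r) - q - r" by (simp add: algebra_simps)
    ultimately have "(q * r) * err s k \<le> (q * r) * s - k + 2 * (q * r) - q - r" using key by linarith
    moreover have "(q * r) * s - k < (q * r) * s - n + p" using assms by linarith
    moreover have "(q * r) * s - n \<le> 0" using n n_mod by linarith
    ultimately show ?thesis using p_less_q p_less_r pos by linarith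
  qed
  then have "err s k < 2" using qr by (rule mult_left_less_imp_less)
  then show "err (n div (q * r)) k \<le> 1" unfolding s_def by simp
qed

lemma wrap_shifts_rounded:
  "wrap (k - q) = wrap k + of_bool (cx k < r') + of_bool (rz k + r' < p) - 1"
  "wrap (k - r) = wrap k + of_bool (cx k < q') - of_bool (p \<le> ry k + q')"
  "wrap (k - r - q) = wrap k + of_bool (cx k < q') + of_bool ((cx k - q') mod p < r')
     - of_bool (p \<le> ry k + q') + of_bool (rz k + r' < p) - 1"
proof -
  have flip: "of_bool (ry k + q' < p) - 1 = - (of_bool (p \<le> ry k + q') :: int)" by (simp add: of_bool_def)
  show "wrap (k - q) = wrap k + of_bool (cx k < r') + of_bool (rz k + r' < p) - 1"
    unfolding wrap_shift_q cz_less_rho_r_iff by simp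
  show r: "wrap (k - r) = wrap k + of_bool (cx k < q') - of_bool (p \<le> ry k + q')"
    unfolding wrap_shift_r cy_less_rho_q_iff using flip by simp
  show "wrap (k - r - q) = wrap k + of_bool (cx k < q') + of_bool ((cx k - q') mod p < r')
     - of_bool (p \<le> ry k + q') + of_bool (rz k + r' < p) - 1"
    unfolding wrap_shift_q r cx_shifts cz_shifts cz_less_rho_r_iff by simp
qed

text \<open>The heart of the argument: for \<open>k\<close> in a window \<open>(n - p, n]\<close>, the summand
  \<open>(\<Delta>\<^sub>q \<Delta>\<^sub>r chi)(k)\<close> equals the four-term pattern in \<open>(cx k, ry k, err k)\<close> with \<open>a = q'\<close>,
  \<open>b = r'\<close>; the relation between the three quantities and \<open>wrap k\<close> is the definition of \<open>err\<close>.\<close>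
lemma chi_window_term:
  assumes "0 \<le> n" "n - p < k" "k \<le> n"
  shows "back_diff q (back_diff r chi) k
           = window_term p q' r' (n div (q * r)) (cx k) (ry k) (err (n div (q * r)) k)"
proof -
  define s where "s = n div (q * r)"
  have base: "cx k + ry k + err s k - s = p * wrap k - rz k" unfolding err_def by simp
  have "back_diff q (back_diff r chi) k = chi k - chi (k - q) - chi (k - r) + chi (k - r - q)"
    by (simp add: back_diff_def algebra_simps)
  also have "\<dots> = window_term p q' r' s (cx k) (ry k) (err s k)"
    unfolding chi_wrap wrap_shifts_rounded[of k]
    using window_term_wraps[OF _ _ _ _ _ _ q'_range r'_range base] coordinate_ranges rounded_ranges
    by (simp add: algebra_simps)
  finally show ?thesis unfolding s_def .
qed

text \<open>As \<open>k\<close> runs through a window of \<open>p\<close> consecutive integers, \<open>cx k\<close> runs through all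
  residues mod \<open>p\<close>, since \<open>q' r'\<close> is invertible mod \<open>p\<close>.\<close>
lemma coprime_q'r': "coprime (q' * r') p"
  using qr_inverse by (auto simp: coprime_iff_invertible_int mult.commute intro: exI[of _ "q * r"])

text \<open>Over a window \<open>(n - p, n]\<close> the summands are pattern values at a complete system of
  residues: with \<open>(a, b) = (q', r')\<close> directly, and with \<open>(a, b) = (p - q', p - r')\<close> after the
  reflection of the pattern.\<close>
lemma window_as_pattern:
  assumes ab: "(a = q' \<and> b = r') \<or> (a = p - q' \<and> b = p - r')"
    and n: "0 \<le> n" "n < N"
  obtains X Y E where "bij_betw X {..<nat p} {0..<p}"
    and "\<forall>i<nat p. 0 \<le> Y i \<and> Y i < p \<and> 0 \<le> E i \<and> E i \<le> 1"
    and "\<forall>i<nat p. back_diff q (back_diff r chi) (n - int i) = window_term p a b (n div (q * r)) (X i) (Y i) (E i)"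
proof -
  define s where "s = n div (q * r)"
  have summand: "back_diff q (back_diff r chi) (n - int i) = window_term p q' r' s (cx (n - int i)) (ry (n - int i)) (err s (n - int i))"
    if "i < nat p" for i using that n unfolding s_def by (intro chi_window_term) auto
  have YE: "\<forall>i<nat p. 0 \<le> ry (n - int i) \<and> ry (n - int i) < p \<and> 0 \<le> err s (n - int i) \<and> err s (n - int i) \<le> 1"
    using n rounded_ranges err_range unfolding s_def by auto
  have cx_progression: "cx (n - int i) = (n * (q' * r') - int i * (q' * r')) mod p" for i
    unfolding cx_def by (simp add: algebra_simps)
  from ab show thesis
  proof
    assume "a = q' \<and> b = r'"
    moreover have "bij_betw (\<lambda>i. cx (n - int i)) {..<nat p} {0..<p}"
      unfolding cx_progression by (rule bij_betw_progression_mod[OF pos(1) coprime_q'r'])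
    ultimately show thesis using that[of "\<lambda>i. cx (n - int i)" "\<lambda>i. ry (n - int i)" "\<lambda>i. err s (n - int i)"]
      summand YE unfolding s_def by auto
  next
    assume ab': "a = p - q' \<and> b = p - r'"
    have "(cx (n - int i) - q' - r') mod p = (n * (q' * r') - q' - r' - int i * (q' * r')) mod p" for i
      unfolding cx_def by (simp add: mod_diff_left_eq algebra_simps)
    then have "bij_betw (\<lambda>i. (cx (n - int i) - q' - r') mod p) {..<nat p} {0..<p}"
      using bij_betw_progression_mod[OF pos(1) coprime_q'r', of "n * (q' * r') - q' - r'"] by simp
    moreover have "window_term p q' r' s (cx (n - int i)) (ry (n - int i)) (err s (n - int i))
        = window_term p a b s ((cx (n - int i) - q' - r') mod p) ((ry (n - int i) + q') mod p) (err s (n - int i))" for i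
      using coordinate_ranges rounded_ranges ab' by (simp add: window_term_reflect)
    ultimately show thesis
      using that[of "\<lambda>i. (cx (n - int i) - q' - r') mod p" "\<lambda>i. (ry (n - int i) + q') mod p" "\<lambda>i. err s (n - int i)"]
        summand YE pos unfolding s_def by auto
  qed
qed

lemma window_sum_bounded:
  assumes ab: "(a = q' \<and> b = r' \<and> q' \<le> r' \<and> q' + r' \<le> p) \<or> (a = p - q' \<and> b = p - r' \<and> r' \<le> q' \<and> p \<le> q' + r')"
    and n: "0 \<le> n" "n < N"
  shows "(\<Sum>i<nat p. back_diff q (back_diff r chi) (n - int i)) \<le> min (2 * a + b) (p - b)"
    and "(\<Sum>i<nat p. back_diff q (back_diff r chi) (n - int i)) \<ge> - min (p + 2 * a - b) b"
proof -
  have s: "0 \<le> n div (q * r)" "n div (q * r) < p"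
    using n pos zdiv_less_iff[of "q * r" n p] unfolding N_def by (auto simp: pos_imp_zdiv_nonneg_iff algebra_simps)
  have ab_range: "1 \<le> a" "a \<le> b" "a + b \<le> p" using ab q'_range by auto
  obtain X Y E where X: "bij_betw X {..<nat p} {0..<p}"
    and YE: "\<forall>i<nat p. 0 \<le> Y i \<and> Y i < p \<and> 0 \<le> E i \<and> E i \<le> 1"
    and summands: "\<forall>i<nat p. back_diff q (back_diff r chi) (n - int i) = window_term p a b (n div (q * r)) (X i) (Y i) (E i)"
    using window_as_pattern[of a b n] ab n by blast
  have "(\<Sum>i<nat p. back_diff q (back_diff r chi) (n - int i)) = (\<Sum>i<nat p. window_term p a b (n div (q * r)) (X i) (Y i) (E i))"
    using summands by simp
  then show "(\<Sum>i<nat p. back_diff q (back_diff r chi) (n - int i)) \<le> min (2 * a + b) (p - b)"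
    and "(\<Sum>i<nat p. back_diff q (back_diff r chi) (n - int i)) \<ge> - min (p + 2 * a - b) b"
    using window_sum_bounds[OF ab_range s X] YE by auto
qed

end

lemma cong_nat_to_int: "[a * b = 1] (mod m) \<Longrightarrow> [int a * int b = 1] (mod int m)"
  by (metis cong_int_iff of_nat_1 of_nat_mult)

lemma ternary_coeff_bounds:
  fixes p q r q' r' a b n :: nat
  assumes primes: "prime p" "prime q" "prime r" and distinct: "p \<noteq> q" "q \<noteq> r" "p \<noteq> r"
    and "p < q" "p < r"
    and q': "1 \<le> q'" "q' < p" "[q * q' = 1] (mod p)" and r': "1 \<le> r'" "r' < p" "[r * r' = 1] (mod p)"
    and ab: "(a = q' \<and> b = r' \<and> q' \<le> r' \<and> q' + r' \<le> p) \<or> (a = p - q' \<and> b = p - r' \<and> r' \<le> q' \<and> p \<le> q' + r')"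
  shows "cyclo_coeff (p * q * r) n \<le> real (min (2 * a + b) (p - b))
       \<and> - cyclo_coeff (p * q * r) n \<le> real (min (p + 2 * a - b) b)"
proof (cases "n < p * q * r")
  case False
  then show ?thesis using cyclo_coeff_eq_0[of "p * q * r" n] primes by (simp add: prime_gt_0_nat)
next
  case True
  have coprime: "coprime p q" "coprime q r" "coprime p r" using primes distinct by (auto intro: primes_coprime)
  obtain pr_inv where pr_inv: "[int p * int r * pr_inv = 1] (mod int q)"
    using cong_solve_coprime_int[of "int p * int r" "int q"] coprime by (auto simp: coprime_commute)
  obtain pq_inv where pq_inv: "[int p * int q * pq_inv = 1] (mod int r)"
    using cong_solve_coprime_int[of "int p * int q" "int r"] coprime by (auto simp: coprime_commute)
  interpret T: ternary "int p" "int q" "int r" "int q'" "int r'" pr_inv pq_inv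
    using prime_ge_2_nat[OF primes(1)] \<open>p < q\<close> \<open>p < r\<close> coprime q' r' pr_inv pq_inv
    by unfold_locales (auto intro: cong_nat_to_int)
  have "coeff (cyclo_poly (p * q * r)) n
      = of_int (\<Sum>i<p. back_diff (int q) (back_diff (int r) T.chi) (int n - int i))"
  proof (rule coeff_from_inverse_series[OF cyclo_ternary_identity'[OF primes distinct] T.chi_neg _ True])
    fix M :: int assume "0 \<le> M" "M < int (p * q * r)"
    then show "back_diff (int (p * q)) (back_diff (int (p * r)) (back_diff (int (q * r)) T.chi)) M = of_bool (M = 0)"
      using T.chi_inverse_series[of M] by (simp add: T.N_def)
  qed
  then have coeff: "cyclo_coeff (p * q * r) n
      = real_of_int (\<Sum>i<nat (int p). back_diff (int q) (back_diff (int r) T.chi) (int n - int i))"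
    by (simp add: cyclo_coeff_def)
  have ab_int: "(int a = int q' \<and> int b = int r' \<and> int q' \<le> int r' \<and> int q' + int r' \<le> int p)
      \<or> (int a = int p - int q' \<and> int b = int p - int r' \<and> int r' \<le> int q' \<and> int p \<le> int q' + int r')"
    using ab q' r' by (auto simp: of_nat_diff)
  have n: "0 \<le> int n" "int n < T.N" using True unfolding T.N_def by (simp_all only: of_nat_mult[symmetric] of_nat_less_iff)
  have "real (min (2 * a + b) (p - b)) = real_of_int (min (2 * int a + int b) (int p - int b))"
    "real (min (p + 2 * a - b) b) = real_of_int (min (int p + 2 * int a - int b) (int b))"
    using ab q' r' by (auto simp: of_nat_diff min_def)
  then show ?thesis
    unfolding coeff using T.window_sum_bounded[OF ab_int n] by linarith
qed

lemma cong_inverse_unique: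
  fixes c x y m :: nat
  assumes "[c * x = 1] (mod m)" "[c * y = 1] (mod m)" "x < m" "y < m"
  shows "x = y"
proof -
  have "[x * (c * y) = x * 1] (mod m)" by (rule cong_mult[OF cong_refl assms(2)])
  moreover have "[y * (c * x) = y * 1] (mod m)" by (rule cong_mult[OF cong_refl assms(1)])
  ultimately have "[x = y] (mod m)" by (metis cong_sym cong_trans mult.left_commute mult_1_right)
  then show ?thesis using assms(3,4) by (rule cong_less_modulus_unique_nat)
qed

lemma cong_reflected_product:
  fixes a b m :: nat
  assumes "a \<le> m" "b \<le> m"
  shows "[(m - a) * (m - b) = a * b] (mod m)"
proof -
  have "int ((m - a) * (m - b)) = (int m - int a) * (int m - int b)"
    using assms by (simp add: of_nat_diff)
  also have "\<dots> = int (a * b) + int m * (int m - int a - int b)" by (simp add: algebra_simps)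
  finally have "[int ((m - a) * (m - b)) = int (a * b)] (mod int m)" by (simp add: cong_def)
  then show ?thesis by (simp only: cong_int_iff)
qed

text \<open>The theorem when the minimum \<open>\<alpha>\<close> is attained at \<open>q'\<close> or at \<open>p - q'\<close>; the other two
  cases follow by exchanging \<open>q\<close> and \<open>r\<close>.  If \<open>\<alpha> = q'\<close> then \<open>\<beta> = r'\<close>, and if \<open>\<alpha> = p - q'\<close>
  then \<open>\<beta> = p - r'\<close>.\<close>
lemma coeff_bounds_alpha_q':
  fixes p q r q' r' \<alpha> \<beta> n :: nat
  assumes primes: "prime p" "prime q" "prime r" and distinct: "p \<noteq> q" "q \<noteq> r" "p \<noteq> r"
    and "p < q" "p < r"
    and q': "1 \<le> q'" "q' < p" "[q * q' = 1] (mod p)" and r': "1 \<le> r'" "r' < p" "[r * r' = 1] (mod p)"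
    and \<alpha>: "\<alpha> = min (min q' r') (min (p - q') (p - r'))" "\<alpha> = q' \<or> \<alpha> = p - q'"
    and \<beta>: "\<beta> < p" "[\<alpha> * \<beta> * q * r = 1] (mod p)"
  shows "cyclo_coeff (p * q * r) n \<le> real (min (2 * \<alpha> + \<beta>) (p - \<beta>))
       \<and> - cyclo_coeff (p * q * r) n \<le> real (min (p + 2 * \<alpha> - \<beta>) \<beta>)"
proof -
  have inv_qr: "[(q' * q) * (r' * r) = 1] (mod p)"
    using cong_mult[OF q'(3) r'(3)] by (simp add: mult_ac)
  have \<beta>_inv: "[(\<alpha> * q * r) * \<beta> = 1] (mod p)" using \<beta>(2) by (simp add: mult_ac)
  from \<alpha>(2) have "(\<alpha> = q' \<and> \<beta> = r' \<and> q' \<le> r' \<and> q' + r' \<le> p)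
      \<or> (\<alpha> = p - q' \<and> \<beta> = p - r' \<and> r' \<le> q' \<and> p \<le> q' + r')"
  proof
    assume "\<alpha> = q'"
    moreover have "[(q' * q * r) * r' = 1] (mod p)" using inv_qr by (simp add: mult_ac)
    ultimately show ?thesis using \<alpha>(1) \<beta>_inv \<beta>(1) r' cong_inverse_unique by auto
  next
    assume "\<alpha> = p - q'"
    moreover have "[((p - q') * q * r) * (p - r') = 1] (mod p)"
    proof -
      have "[(p - q') * (p - r') * (q * r) = q' * r' * (q * r)] (mod p)"
        using q' r' by (intro cong_mult cong_reflected_product cong_refl) auto
      then show ?thesis using inv_qr by (metis cong_trans mult.commute mult.left_commute)
    qed
    ultimately show ?thesis using \<alpha>(1) \<beta>_inv \<beta>(1) q' r' cong_inverse_unique[of "(p - q') * q * r" \<beta> p "p - r'"]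
      by auto
  qed
  then show ?thesis using ternary_coeff_bounds[OF assms(1-14)] by blast
qed

theorem theorem1:
  fixes p q r q' r' \<beta> :: nat
  assumes "prime p" "prime q" "prime r"
    and "p \<noteq> q" "q \<noteq> r" "p \<noteq> r" "p < q" "p < r"
    and "1 \<le> q'" "q' \<le> p - 1" "[q * q' = 1] (mod p)"
    and "1 \<le> r'" "r' \<le> p - 1" "[r * r' = 1] (mod p)"
    and "0 < \<beta>" "\<beta> < p"
    and "[min (min q' r') (min (p - q') (p - r')) * \<beta> * q * r = 1] (mod p)"
  shows "(\<forall>n. cyclo_coeff (p * q * r) n \<le>
            real (min (2 * min (min q' r') (min (p - q') (p - r')) + \<beta>) (p - \<beta>)))
       \<and> (\<forall>n. - cyclo_coeff (p * q * r) n \<le>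
            real (min (p + 2 * min (min q' r') (min (p - q') (p - r')) - \<beta>) \<beta>))"
proof -
  define \<alpha> where "\<alpha> = min (min q' r') (min (p - q') (p - r'))"
  have q': "1 \<le> q'" "q' < p" and r': "1 \<le> r'" "r' < p" using assms(9,10,12,13) by auto
  have \<beta>: "[\<alpha> * \<beta> * q * r = 1] (mod p)" using assms(17) unfolding \<alpha>_def .
  have "cyclo_coeff (p * q * r) n \<le> real (min (2 * \<alpha> + \<beta>) (p - \<beta>))
      \<and> - cyclo_coeff (p * q * r) n \<le> real (min (p + 2 * \<alpha> - \<beta>) \<beta>)" for n
  proof (cases "\<alpha> = q' \<or> \<alpha> = p - q'")
    case True
    show ?thesis by (rule coeff_bounds_alpha_q'[OF assms(1-8) q' assms(11) r' assms(14) \<alpha>_def True assms(16) \<beta>])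
  next
    case False
    then have "\<alpha> = r' \<or> \<alpha> = p - r'" unfolding \<alpha>_def by (auto simp: min_def)
    moreover have "\<alpha> = min (min r' q') (min (p - r') (p - q'))" unfolding \<alpha>_def by (simp add: ac_simps)
    moreover have "[\<alpha> * \<beta> * r * q = 1] (mod p)" using \<beta> by (simp add: ac_simps)
    moreover have "p * r * q = p * q * r" by (simp add: ac_simps)
    ultimately show ?thesis
      using coeff_bounds_alpha_q'[OF assms(1,3,2) assms(6) assms(5)[symmetric] assms(4) assms(8,7) r' assms(14) q' assms(11)] assms(16)
      by metis
  qed
  then show ?thesis unfolding \<alpha>_def by blast
qed

end
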